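(* Let $D$ be a good drawing of $K_n$ with $cr(D)\ge H(n)$ and let $m=\lfloor n/2\rfloor-2$. For every face $F\in\mathcal F(D)$ such that, with respect to $F$, $\Delta^{(3)}_m(D)\ge\Delta^{(2)}_m(D)$, we have $\Delta^{(3)}_{m-1}(D)\ge 0$ with respect to $F$.
   Context: A good drawing of $K_n$ is a drawing on the sphere $S^2$ in which vertices are distinct points and each edge is a simple curve joining its endpoints containing no other vertex, such that any two edges share finitely many points, no two edges meet tangentially, no three edges cross at a common point, any two edges cross at most once, and adjacent edges do not cross. $cr(D)$ is the number of crossings and $H(n)=\frac14\lfloor\frac n2\rfloor\lfloor\frac{n-1}2\rfloor\lfloor\frac{n-2}2\rfloor\lfloor\frac{n-3}2\rfloor$. $\mathcal F(D)$ is the set of faces. $k$-edges w.r.t. a reference face $F$: for an oriented edge $e=uv$ and $w\notin\{u,v\}$, the triangle $uvw$ has orientation $+$ if $F$ lies in the part of $S^2$ to the left of $e$ bounded by the triangle, else $-$; if $i$ of the $n-2$ triangles are $+$, $e$ is a $k$-edge with $k=\min(i,n-2-i)$; $E_k(D)$ is the number of $k$-edges. $k$-deviations (w.r.t. $F$), for $0\le k\le\lfloor n/2\rfloor-2$: $\Delta_k(D)=E_k(D)-3(k+1)$, $\Delta^{(2)}_k(D)=\sum_{i=0}^k(k+1-i)\Delta_i(D)$, $\Delta^{(3)}_k(D)=\sum_{i=0}^k\binom{k+2-i}{2}\Delta_i(D)$, and $\Delta^{(3)}_{-1}(D)=0$. *)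

theory Defs
  imports "HOL-Analysis.Analysis" "HOL-Complex_Analysis.Winding_Numbers"
begin

abbreviation S2 :: "(real^3) set" where
  "S2 \<equiv> sphere 0 1"

definition Kedges :: "nat \<Rightarrow> (nat \<times> nat) set" where
  "Kedges n = {(i, j). i < j \<and> j < n}"

definition eint :: "(real \<Rightarrow> real^3) \<Rightarrow> (real^3) set" where
  "eint g = g ` {0<..<1}"

text \<open>Proper (non-tangential) crossing of two curve images A and B at p:
  locally around p the pair (A,B) looks like the pair of coordinate axes.\<close>
definition proper_crossing :: "(real^3) set \<Rightarrow> (real^3) set \<Rightarrow> real^3 \<Rightarrow> bool" where
  "proper_crossing A B p \<longleftrightarrow>
     (\<exists>U (h :: real^3 \<Rightarrow> complex) k. openin (top_of_set S2) U \<and> p \<in> U \<and>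
        homeomorphism U (ball 0 1) h k \<and> h p = 0 \<and>
        h ` (U \<inter> A) = {z \<in> ball 0 1. Im z = 0} \<and>
        h ` (U \<inter> B) = {z \<in> ball 0 1. Re z = 0})"

text \<open>A good drawing of K_n on S^2: V i is the position of vertex i, g (i,j) (i<j) is
  the curve of edge ij, parametrised on [0,1] from V i to V j.\<close>
definition good_drawing :: "nat \<Rightarrow> (nat \<Rightarrow> real^3) \<Rightarrow> (nat \<times> nat \<Rightarrow> real \<Rightarrow> real^3) \<Rightarrow> bool" where
  "good_drawing n V g \<longleftrightarrow>
     (\<forall>i<n. V i \<in> S2) \<and> inj_on V {..<n} \<and>
     (\<forall>e\<in>Kedges n. arc (g e) \<and> path_image (g e) \<subseteq> S2 \<and>
        pathstart (g e) = V (fst e) \<and> pathfinish (g e) = V (snd e) \<and>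
        (\<forall>k<n. k \<noteq> fst e \<and> k \<noteq> snd e \<longrightarrow> V k \<notin> path_image (g e))) \<and>
     (\<forall>e\<in>Kedges n. \<forall>f\<in>Kedges n. e \<noteq> f \<longrightarrow>
        finite (path_image (g e) \<inter> path_image (g f))) \<and>
     (\<forall>e\<in>Kedges n. \<forall>f\<in>Kedges n. e \<noteq> f \<longrightarrow>
        (\<forall>p\<in>eint (g e) \<inter> eint (g f). proper_crossing (path_image (g e)) (path_image (g f)) p)) \<and>
     (\<forall>e\<in>Kedges n. \<forall>f\<in>Kedges n. \<forall>d\<in>Kedges n. e \<noteq> f \<and> e \<noteq> d \<and> f \<noteq> d \<longrightarrow>
        eint (g e) \<inter> eint (g f) \<inter> eint (g d) = {}) \<and>
     (\<forall>e\<in>Kedges n. \<forall>f\<in>Kedges n. e \<noteq> f \<longrightarrow> card (eint (g e) \<inter> eint (g f)) \<le> 1) \<and>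
     (\<forall>e\<in>Kedges n. \<forall>f\<in>Kedges n. e \<noteq> f \<and>
        (fst e = fst f \<or> fst e = snd f \<or> snd e = fst f \<or> snd e = snd f) \<longrightarrow>
        eint (g e) \<inter> eint (g f) = {})"

definition cr :: "nat \<Rightarrow> (nat \<times> nat \<Rightarrow> real \<Rightarrow> real^3) \<Rightarrow> nat" where
  "cr n g = card {(P, p) | P p e f. P = {e, f} \<and> e \<in> Kedges n \<and> f \<in> Kedges n \<and> e \<noteq> f \<and>
                                 p \<in> eint (g e) \<inter> eint (g f)}"

definition H :: "nat \<Rightarrow> real" where
  "H n = (1/4) * of_int (\<lfloor>real n / 2\<rfloor> * \<lfloor>(real n - 1) / 2\<rfloor> * \<lfloor>(real n - 2) / 2\<rfloor> * \<lfloor>(real n - 3) / 2\<rfloor>)"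

definition faces :: "nat \<Rightarrow> (nat \<times> nat \<Rightarrow> real \<Rightarrow> real^3) \<Rightarrow> (real^3) set set" where
  "faces n g = (let R = S2 - (\<Union>e\<in>Kedges n. path_image (g e)) in
                 {connected_component_set R x | x. x \<in> R})"

definition oedge :: "(nat \<times> nat \<Rightarrow> real \<Rightarrow> real^3) \<Rightarrow> nat \<Rightarrow> nat \<Rightarrow> real \<Rightarrow> real^3" where
  "oedge g i j = (if i < j then g (i, j) else reversepath (g (j, i)))"

text \<open>Stereographic projection of S^2 - {q} from q onto the plane orthogonal to q,
  identified with C via a fixed orthonormal basis of that plane.\<close>
definition stereo :: "real^3 \<Rightarrow> real^3 \<Rightarrow> complex" where
  "stereo q = (let (b1, b2) = (SOME (b1, b2). norm b1 = 1 \<and> norm b2 = 1 \<and>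
                   b1 \<bullet> b2 = 0 \<and> b1 \<bullet> q = 0 \<and> b2 \<bullet> q = 0)
               in (\<lambda>x. Complex ((x \<bullet> b1) / (1 - x \<bullet> q)) ((x \<bullet> b2) / (1 - x \<bullet> q))))"

text \<open>The triangle uvw has orientation + w.r.t. the reference point q (a point of the
  reference face F): after projecting from q, so that the side containing F becomes the
  unbounded side, the triangle winds (+1) around its bounded side. This fixes one of the two
  orientation conventions; the k-value min(i, n-2-i) does not depend on this choice.\<close>
definition tri_plus :: "(nat \<times> nat \<Rightarrow> real \<Rightarrow> real^3) \<Rightarrow> real^3 \<Rightarrow> nat \<Rightarrow> nat \<Rightarrow> nat \<Rightarrow> bool" where
  "tri_plus g q u v w \<longleftrightarrow>
     (let T = stereo q \<circ> (oedge g u v +++ oedge g v w +++ oedge g w u) in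
      \<exists>z. z \<notin> path_image T \<and> winding_number T z = 1)"

definition kval :: "nat \<Rightarrow> (nat \<times> nat \<Rightarrow> real \<Rightarrow> real^3) \<Rightarrow> real^3 \<Rightarrow> nat \<times> nat \<Rightarrow> nat" where
  "kval n g q e = (let i = card {w. w < n \<and> w \<noteq> fst e \<and> w \<noteq> snd e \<and> tri_plus g q (fst e) (snd e) w}
                   in min i (n - 2 - i))"

definition Ek :: "nat \<Rightarrow> (nat \<times> nat \<Rightarrow> real \<Rightarrow> real^3) \<Rightarrow> real^3 \<Rightarrow> int \<Rightarrow> int" where
  "Ek n g q k = int (card {e \<in> Kedges n. int (kval n g q e) = k})"

definition Delta1 :: "nat \<Rightarrow> (nat \<times> nat \<Rightarrow> real \<Rightarrow> real^3) \<Rightarrow> real^3 \<Rightarrow> int \<Rightarrow> int" where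
  "Delta1 n g q k = Ek n g q k - 3 * (k + 1)"

definition Delta2 :: "nat \<Rightarrow> (nat \<times> nat \<Rightarrow> real \<Rightarrow> real^3) \<Rightarrow> real^3 \<Rightarrow> int \<Rightarrow> int" where
  "Delta2 n g q k = (\<Sum>i\<in>{0..k}. (k + 1 - i) * Delta1 n g q i)"

text \<open>Note: for k = -1 the sum is empty, giving the convention Delta3_{-1} = 0.\<close>
definition Delta3 :: "nat \<Rightarrow> (nat \<times> nat \<Rightarrow> real \<Rightarrow> real^3) \<Rightarrow> real^3 \<Rightarrow> int \<Rightarrow> int" where
  "Delta3 n g q k = (\<Sum>i\<in>{0..k}. int (nat (k + 2 - i) choose 2) * Delta1 n g q i)"

end

theory Submission
  imports Defs
begin

text \<open>The weights of the third-order deviations are the triangular numbers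
  C(k + 2 - i, 2) = (k + 1 - i) + C(k + 1 - i, 2), i.e. the weights of the second-order
  deviation plus those of the third-order deviation one index lower.\<close>

lemma choose2_weight_step:
  fixes i k :: int
  assumes "i \<le> k"
  shows "int (nat (k + 2 - i) choose 2) = (k + 1 - i) + int (nat (k + 1 - i) choose 2)"
proof -
  have "nat (k + 2 - i) = Suc (nat (k + 1 - i))" using assms by simp
  moreover have "Suc j choose 2 = j + (j choose 2)" for j
    by (simp add: numeral_2_eq_2)
  ultimately show ?thesis using assms by simp
qed

lemma sum_choose2_weights_recurrence:
  fixes f :: "int \<Rightarrow> int" and k :: int
  shows "(\<Sum>i\<in>{0..k}. int (nat (k + 2 - i) choose 2) * f i)
       = (\<Sum>i\<in>{0..k - 1}. int (nat (k + 1 - i) choose 2) * f i) + (\<Sum>i\<in>{0..k}. (k + 1 - i) * f i)"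
proof (cases "k < 0")
  case True
  then show ?thesis by simp
next
  case False
  have "(\<Sum>i\<in>{0..k}. int (nat (k + 2 - i) choose 2) * f i)
      = (\<Sum>i\<in>{0..k}. int (nat (k + 1 - i) choose 2) * f i + (k + 1 - i) * f i)"
  proof (rule sum.cong)
    fix i assume "i \<in> {0..k}"
    then have "i \<le> k" by simp
    then show "int (nat (k + 2 - i) choose 2) * f i
        = int (nat (k + 1 - i) choose 2) * f i + (k + 1 - i) * f i"
      unfolding choose2_weight_step[OF \<open>i \<le> k\<close>] by (simp add: distrib_right)
  qed simp
  also have "\<dots> = (\<Sum>i\<in>{0..k}. int (nat (k + 1 - i) choose 2) * f i) + (\<Sum>i\<in>{0..k}. (k + 1 - i) * f i)"
    by (rule sum.distrib)
  also have "(\<Sum>i\<in>{0..k}. int (nat (k + 1 - i) choose 2) * f i)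
      = (\<Sum>i\<in>insert k {0..k - 1}. int (nat (k + 1 - i) choose 2) * f i)"
    using False by (intro sum.cong) auto
  finally show ?thesis by simp
qed

lemma Delta3_recurrence:
  "Delta3 n g q k = Delta3 n g q (k - 1) + Delta2 n g q k"
proof -
  have "k - 1 + 2 - i = k + 1 - i" for i :: int by simp
  then show ?thesis
    unfolding Delta3_def Delta2_def
    using sum_choose2_weights_recurrence[of k "Delta1 n g q"] by presburger
qed

theorem mainTheorem10:
  fixes n :: nat and V :: "nat \<Rightarrow> real^3" and g :: "nat \<times> nat \<Rightarrow> real \<Rightarrow> real^3"
    and F :: "(real^3) set" and q :: "real^3"
  assumes "good_drawing n V g"
    and "real (cr n g) \<ge> H n"
    and "F \<in> faces n g" and "q \<in> F"
    and "Delta3 n g q (int n div 2 - 2) \<ge> Delta2 n g q (int n div 2 - 2)"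
  shows "Delta3 n g q (int n div 2 - 2 - 1) \<ge> 0"
  using assms(5) Delta3_recurrence[of n g q "int n div 2 - 2"] by simp

end
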